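(* Let $(X,d)$ be a compact metric space and $\mathcal{W}$ a uniformly bounded open cover of $X$. If $U$ is an open subset of $X$, then $P_U$ is open in $\mathrm{Viet}^{\mathrm{m}}(\mathcal{W})$. If $\mathcal{U}=\{U_1,\dots,U_n\}$ is a collection of open subsets of $X$, then $P_{\mathcal{U}}$ is open in $\mathrm{Viet}^{\mathrm{m}}(\mathcal{W})$.
   Context: $\mathrm{Viet}^{\mathrm{m}}(\mathcal{W})$ is the set of finitely supported probability measures on $X$ whose support is contained in some element of $\mathcal{W}$, with the $1$-Wasserstein metric. For $U\subseteq X$, $P_U=\{\mu\in\mathrm{Viet}^{\mathrm{m}}(\mathcal{W}) : \mathrm{supp}(\mu)\cap U\neq\varnothing\}$, and for a finite collection $\mathcal{U}=\{U_1,\dots,U_n\}$, $P_{\mathcal{U}}=\bigcap_{i=1}^nP_{U_i}$. *)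

theory Defs
  imports "HOL-Analysis.Analysis"
begin

text \<open>Finitely supported probability measures on a set X of a metric space are
represented by their mass functions.\<close>

definition fsupp :: "('b \<Rightarrow> real) \<Rightarrow> 'b set" where
  "fsupp f = {x. f x \<noteq> 0}"

definition fprob :: "'a set \<Rightarrow> ('a \<Rightarrow> real) \<Rightarrow> bool" where
  "fprob X \<mu> \<longleftrightarrow> (\<forall>x. \<mu> x \<ge> 0) \<and> finite (fsupp \<mu>) \<and> fsupp \<mu> \<subseteq> X
      \<and> sum \<mu> (fsupp \<mu>) = 1"

definition coupling :: "('a \<Rightarrow> real) \<Rightarrow> ('a \<Rightarrow> real) \<Rightarrow> ('a \<times> 'a \<Rightarrow> real) \<Rightarrow> bool" where
  "coupling \<mu> \<nu> \<pi> \<longleftrightarrow> (\<forall>p. \<pi> p \<ge> 0) \<and> fsupp \<pi> \<subseteq> fsupp \<mu> \<times> fsupp \<nu>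
      \<and> (\<forall>x. (\<Sum>y\<in>fsupp \<nu>. \<pi> (x, y)) = \<mu> x)
      \<and> (\<forall>y. (\<Sum>x\<in>fsupp \<mu>. \<pi> (x, y)) = \<nu> y)"

definition wasserstein1 :: "('a::metric_space \<Rightarrow> real) \<Rightarrow> ('a \<Rightarrow> real) \<Rightarrow> real" where
  "wasserstein1 \<mu> \<nu> = Inf {(\<Sum>p\<in>fsupp \<pi>. \<pi> p * dist (fst p) (snd p)) | \<pi>. coupling \<mu> \<nu> \<pi>}"

definition viet_m :: "'a set \<Rightarrow> 'a set set \<Rightarrow> ('a \<Rightarrow> real) set" where
  "viet_m X \<W> = {\<mu>. fprob X \<mu> \<and> (\<exists>w\<in>\<W>. fsupp \<mu> \<subseteq> w)}"

definition P_set :: "'a set \<Rightarrow> 'a set set \<Rightarrow> 'a set \<Rightarrow> ('a \<Rightarrow> real) set" where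
  "P_set X \<W> U = {\<mu> \<in> viet_m X \<W>. fsupp \<mu> \<inter> U \<noteq> {}}"

definition P_coll :: "'a set \<Rightarrow> 'a set set \<Rightarrow> 'a set set \<Rightarrow> ('a \<Rightarrow> real) set" where
  "P_coll X \<W> \<U> = viet_m X \<W> \<inter> (\<Inter>U\<in>\<U>. P_set X \<W> U)"

definition viet_open :: "'a::metric_space set \<Rightarrow> 'a set set \<Rightarrow> ('a \<Rightarrow> real) set \<Rightarrow> bool" where
  "viet_open X \<W> A \<longleftrightarrow> A \<subseteq> viet_m X \<W> \<and>
     (\<forall>\<mu>\<in>A. \<exists>e>0. \<forall>\<nu>\<in>viet_m X \<W>. wasserstein1 \<mu> \<nu> < e \<longrightarrow> \<nu> \<in> A)"

end

theory Submission
  imports Defs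
begin

text \<open>If \<mu> puts mass m on a point x0 \<in> U and the trace on X of the ball of radius r
around x0 lies in U, then every coupling of \<mu> with a measure \<nu> whose support misses U
must move the mass m at least the distance r, so the Wasserstein distance from \<mu> to \<nu>
is at least m r. Hence P_U contains a Wasserstein ball around \<mu>, and for a finite
collection the smallest of the finitely many radii works.\<close>

lemma coupling_product:
  assumes "fprob X \<mu>" "fprob Y \<nu>"
  shows "coupling \<mu> \<nu> (\<lambda>p. \<mu> (fst p) * \<nu> (snd p))"
proof -
  have total: "sum \<mu> (fsupp \<mu>) = 1" "sum \<nu> (fsupp \<nu>) = 1"
    using assms by (auto simp: fprob_def)
  have "(\<Sum>y\<in>fsupp \<nu>. \<mu> x * \<nu> y) = \<mu> x" for x
    using total by (simp add: sum_distrib_left[symmetric])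
  moreover have "(\<Sum>x\<in>fsupp \<mu>. \<mu> x * \<nu> y) = \<nu> y" for y
    using total by (simp add: sum_distrib_right[symmetric])
  ultimately show ?thesis
    using assms unfolding coupling_def fprob_def fsupp_def by auto
qed

lemma coupling_cost_ge_mass_mult_dist:
  fixes \<mu> \<nu> :: "'a::metric_space \<Rightarrow> real"
  assumes \<pi>: "coupling \<mu> \<nu> \<pi>"
    and fin: "finite (fsupp \<mu>)" "finite (fsupp \<nu>)"
    and x0: "x0 \<in> fsupp \<mu>"
    and far: "\<forall>y\<in>fsupp \<nu>. r \<le> dist x0 y"
  shows "\<mu> x0 * r \<le> (\<Sum>p\<in>fsupp \<pi>. \<pi> p * dist (fst p) (snd p))"
proof -
  have nonneg: "\<pi> p \<ge> 0" for p
    using \<pi> unfolding coupling_def by blast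
  have supp: "fsupp \<pi> \<subseteq> fsupp \<mu> \<times> fsupp \<nu>"
    using \<pi> by (simp add: coupling_def)
  have marginal: "(\<Sum>y\<in>fsupp \<nu>. \<pi> (x0, y)) = \<mu> x0"
    using \<pi> by (simp add: coupling_def)
  have "\<mu> x0 * r = (\<Sum>y\<in>fsupp \<nu>. \<pi> (x0, y) * r)"
    using marginal by (simp add: sum_distrib_right[symmetric])
  also have "\<dots> \<le> (\<Sum>y\<in>fsupp \<nu>. \<pi> (x0, y) * dist x0 y)"
    using far nonneg by (intro sum_mono mult_left_mono) auto
  also have "\<dots> = (\<Sum>p\<in>Pair x0 ` fsupp \<nu>. \<pi> p * dist (fst p) (snd p))"
    by (simp add: sum.reindex inj_on_def)
  also have "\<dots> \<le> (\<Sum>p\<in>fsupp \<mu> \<times> fsupp \<nu>. \<pi> p * dist (fst p) (snd p))"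
    using fin x0 nonneg by (intro sum_mono2) auto
  also have "\<dots> = (\<Sum>p\<in>fsupp \<pi>. \<pi> p * dist (fst p) (snd p))"
    using fin supp by (intro sum.mono_neutral_right) (auto simp: fsupp_def)
  finally show ?thesis .
qed

lemma mass_mult_dist_le_wasserstein1:
  assumes "fprob X \<mu>" "fprob X \<nu>" "x0 \<in> fsupp \<mu>"
    and "\<forall>y\<in>fsupp \<nu>. r \<le> dist x0 y"
  shows "\<mu> x0 * r \<le> wasserstein1 \<mu> \<nu>"
  unfolding wasserstein1_def
proof (rule cInf_greatest)
  show "{\<Sum>p\<in>fsupp \<pi>. \<pi> p * dist (fst p) (snd p) | \<pi>. coupling \<mu> \<nu> \<pi>} \<noteq> {}"
    using coupling_product[OF assms(1,2)] by blast
  show "\<mu> x0 * r \<le> c"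
    if "c \<in> {\<Sum>p\<in>fsupp \<pi>. \<pi> p * dist (fst p) (snd p) | \<pi>. coupling \<mu> \<nu> \<pi>}" for c
    using that assms coupling_cost_ge_mass_mult_dist by (fastforce simp: fprob_def)
qed

lemma viet_open_P_set:
  assumes U: "openin (top_of_set X) U"
  shows "viet_open X \<W> (P_set X \<W> U)"
  unfolding viet_open_def
proof (intro conjI ballI)
  show "P_set X \<W> U \<subseteq> viet_m X \<W>"
    by (auto simp: P_set_def)
  fix \<mu> assume \<mu>: "\<mu> \<in> P_set X \<W> U"
  then have prob\<mu>: "fprob X \<mu>"
    by (simp add: P_set_def viet_m_def)
  obtain x0 where x0: "x0 \<in> fsupp \<mu>" "x0 \<in> U"
    using \<mu> by (auto simp: P_set_def)
  have mass: "\<mu> x0 > 0"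
    using prob\<mu> x0(1) unfolding fprob_def fsupp_def by (simp add: order_less_le)
  obtain r where r: "r > 0" "\<forall>x\<in>X. dist x x0 < r \<longrightarrow> x \<in> U"
    using U x0(2) unfolding openin_euclidean_subtopology_iff by blast
  show "\<exists>e>0. \<forall>\<nu>\<in>viet_m X \<W>. wasserstein1 \<mu> \<nu> < e \<longrightarrow> \<nu> \<in> P_set X \<W> U"
  proof (intro exI[of _ "\<mu> x0 * r"] conjI ballI impI)
    show "\<mu> x0 * r > 0"
      using mass r(1) by simp
    fix \<nu> assume \<nu>: "\<nu> \<in> viet_m X \<W>" and close: "wasserstein1 \<mu> \<nu> < \<mu> x0 * r"
    then have prob\<nu>: "fprob X \<nu>"
      by (simp add: viet_m_def)
    show "\<nu> \<in> P_set X \<W> U"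
    proof (rule ccontr)
      assume "\<nu> \<notin> P_set X \<W> U"
      then have "fsupp \<nu> \<inter> U = {}"
        using \<nu> by (simp add: P_set_def)
      then have "\<forall>y\<in>fsupp \<nu>. r \<le> dist x0 y"
        using r(2) prob\<nu> unfolding fprob_def by (force simp: dist_commute)
      then have "\<mu> x0 * r \<le> wasserstein1 \<mu> \<nu>"
        using mass_mult_dist_le_wasserstein1[OF prob\<mu> prob\<nu> x0(1)] by blast
      with close show False
        by simp
    qed
  qed
qed

lemma viet_open_viet_m: "viet_open X \<W> (viet_m X \<W>)"
  unfolding viet_open_def by (auto intro: exI[of _ 1])

lemma viet_open_Int:
  assumes "viet_open X \<W> A" "viet_open X \<W> B"
  shows "viet_open X \<W> (A \<inter> B)"
  unfolding viet_open_def
proof (intro conjI ballI)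
  show "A \<inter> B \<subseteq> viet_m X \<W>"
    using assms by (auto simp: viet_open_def)
  fix \<mu> assume "\<mu> \<in> A \<inter> B"
  then obtain d e where
      "d > 0" "\<forall>\<nu>\<in>viet_m X \<W>. wasserstein1 \<mu> \<nu> < d \<longrightarrow> \<nu> \<in> A"
      "e > 0" "\<forall>\<nu>\<in>viet_m X \<W>. wasserstein1 \<mu> \<nu> < e \<longrightarrow> \<nu> \<in> B"
    using assms unfolding viet_open_def by blast
  then show "\<exists>e>0. \<forall>\<nu>\<in>viet_m X \<W>. wasserstein1 \<mu> \<nu> < e \<longrightarrow> \<nu> \<in> A \<inter> B"
    by (intro exI[of _ "min d e"]) auto
qed

lemma viet_open_Inter:
  assumes "finite \<F>" "\<forall>A\<in>\<F>. viet_open X \<W> A"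
  shows "viet_open X \<W> (viet_m X \<W> \<inter> \<Inter>\<F>)"
  using assms
proof (induction \<F> rule: finite_induct)
  case empty
  then show ?case
    by (simp add: viet_open_viet_m)
next
  case (insert A \<F>)
  have "viet_m X \<W> \<inter> \<Inter>(insert A \<F>) = A \<inter> (viet_m X \<W> \<inter> \<Inter>\<F>)"
    by auto
  with insert show ?case
    by (simp add: viet_open_Int)
qed

theorem proposition4p5:
  fixes X :: "'a::metric_space set" and \<W> :: "'a set set"
  assumes "compact X"
    and "\<forall>w\<in>\<W>. openin (top_of_set X) w"
    and "\<Union>\<W> = X"
    and "\<exists>B. \<forall>w\<in>\<W>. \<forall>x\<in>w. \<forall>y\<in>w. dist x y \<le> B"
  shows "(\<forall>U. openin (top_of_set X) U \<longrightarrow> viet_open X \<W> (P_set X \<W> U))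
    \<and> (\<forall>\<U>. finite \<U> \<and> (\<forall>U\<in>\<U>. openin (top_of_set X) U) \<longrightarrow> viet_open X \<W> (P_coll X \<W> \<U>))"
proof (intro conjI allI impI)
  show "viet_open X \<W> (P_set X \<W> U)" if "openin (top_of_set X) U" for U
    using that by (rule viet_open_P_set)
  show "viet_open X \<W> (P_coll X \<W> \<U>)"
    if "finite \<U> \<and> (\<forall>U\<in>\<U>. openin (top_of_set X) U)" for \<U>
    using that viet_open_Inter[of "P_set X \<W> ` \<U>" X \<W>]
    by (simp add: P_coll_def viet_open_P_set)
qed

end
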